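(* Every tree with at least three vertices has at least one saturated vertex.
   Context: A $2$-matching of a graph $G$ is a set of edges such that every vertex is incident to at most two of them; a maximum $2$-matching is one of largest possible size. A vertex $w$ is saturated in $G$ if every maximum $2$-matching of $G$ has exactly two edges incident to $w$. *)

theory Defs
  imports Main
begin

definition simple_graph :: "'a set \<Rightarrow> 'a set set \<Rightarrow> bool" where
  "simple_graph V E \<longleftrightarrow> finite V \<and>
     (\<forall>e\<in>E. \<exists>u v. e = {u, v} \<and> u \<noteq> v \<and> u \<in> V \<and> v \<in> V)"

definition adj :: "'a set set \<Rightarrow> 'a \<Rightarrow> 'a \<Rightarrow> bool" where
  "adj E u v \<longleftrightarrow> {u, v} \<in> E"

definition connected_graph :: "'a set \<Rightarrow> 'a set set \<Rightarrow> bool" where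
  "connected_graph V E \<longleftrightarrow> (\<forall>u\<in>V. \<forall>v\<in>V. (adj E)\<^sup>*\<^sup>* u v)"

definition is_cycle :: "'a set set \<Rightarrow> 'a list \<Rightarrow> bool" where
  "is_cycle E cs \<longleftrightarrow> length cs \<ge> 3 \<and> distinct cs \<and>
     (\<forall>i. Suc i < length cs \<longrightarrow> adj E (cs ! i) (cs ! Suc i)) \<and>
     adj E (last cs) (hd cs)"

definition acyclic_graph :: "'a set set \<Rightarrow> bool" where
  "acyclic_graph E \<longleftrightarrow> \<not> (\<exists>cs. is_cycle E cs)"

definition tree :: "'a set \<Rightarrow> 'a set set \<Rightarrow> bool" where
  "tree V E \<longleftrightarrow> simple_graph V E \<and> V \<noteq> {} \<and> connected_graph V E \<and> acyclic_graph E"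

definition two_matching :: "'a set set \<Rightarrow> 'a set set \<Rightarrow> bool" where
  "two_matching E M \<longleftrightarrow> M \<subseteq> E \<and> (\<forall>v. card {e\<in>M. v \<in> e} \<le> 2)"

definition max_two_matching :: "'a set set \<Rightarrow> 'a set set \<Rightarrow> bool" where
  "max_two_matching E M \<longleftrightarrow> two_matching E M \<and>
     (\<forall>M'. two_matching E M' \<longrightarrow> card M' \<le> card M)"

definition saturated :: "'a set \<Rightarrow> 'a set set \<Rightarrow> 'a \<Rightarrow> bool" where
  "saturated V E w \<longleftrightarrow> w \<in> V \<and>
     (\<forall>M. max_two_matching E M \<longrightarrow> card {e\<in>M. w \<in> e} = 2)"

end

theory Submission
  imports Defs
begin

text \<open>A vertex w with two distinct neighbours of degree at most 2 is saturated: if a maximum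
  2-matching used at most one edge at w, one of the two edges to these neighbours would be unused,
  and its other end would meet at most one matching edge, so the edge could be added.
  Such a w exists in every tree on at least three vertices. If it did not, then every vertex of
  degree at least 3 would have at most one neighbour of degree at most 2, so the vertices of degree
  at least 3 would span a subgraph of minimum degree 2, which contains a cycle; and if there is no
  vertex of degree at least 3, every vertex would have degree at most 1, which a connected graph
  on three vertices does not allow.\<close>

definition neighbours :: "'a set set \<Rightarrow> 'a \<Rightarrow> 'a set" where
  "neighbours E v = {u. adj E v u}"

abbreviation degree :: "'a set set \<Rightarrow> 'a \<Rightarrow> nat" where
  "degree E v \<equiv> card (neighbours E v)"

definition has_two_low_degree_neighbours :: "'a set set \<Rightarrow> 'a \<Rightarrow> bool" where
  "has_two_low_degree_neighbours E w \<longleftrightarrow>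
     (\<exists>c1 c2. adj E w c1 \<and> adj E w c2 \<and> c1 \<noteq> c2 \<and> degree E c1 \<le> 2 \<and> degree E c2 \<le> 2)"

definition path_in :: "'a set set \<Rightarrow> 'a set \<Rightarrow> 'a list \<Rightarrow> bool" where
  "path_in E B xs \<longleftrightarrow> distinct xs \<and> set xs \<subseteq> B \<and>
     (\<forall>i. Suc i < length xs \<longrightarrow> adj E (xs ! i) (xs ! Suc i))"

lemma adj_commute: "adj E u v \<longleftrightarrow> adj E v u"
  by (simp add: adj_def insert_commute)

lemma simple_graph_not_adj_self: "simple_graph V E \<Longrightarrow> \<not> adj E v v"
  unfolding simple_graph_def adj_def by (metis doubleton_eq_iff insert_absorb2)

lemma simple_graph_adj_in_vertices: "simple_graph V E \<Longrightarrow> adj E u v \<Longrightarrow> u \<in> V \<and> v \<in> V"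
  unfolding simple_graph_def adj_def by (metis doubleton_eq_iff)

lemma simple_graph_finite_edges:
  assumes "simple_graph V E"
  shows "finite E"
proof -
  have "E \<subseteq> Pow V" using assms by (auto simp: simple_graph_def)
  with assms show ?thesis by (simp add: simple_graph_def finite_subset)
qed

lemma neighbours_subset_vertices: "simple_graph V E \<Longrightarrow> neighbours E v \<subseteq> V"
  by (auto simp: neighbours_def dest: simple_graph_adj_in_vertices)

lemma finite_neighbours: "simple_graph V E \<Longrightarrow> finite (neighbours E v)"
  using neighbours_subset_vertices by (metis simple_graph_def finite_subset)

lemma card_incident_edges_less_degree:
  assumes sg: "simple_graph V E" and "M \<subseteq> E" and "adj E c w" and "{c, w} \<notin> M"
  shows "card {e\<in>M. c \<in> e} < degree E c"
proof -
  have "{e\<in>M. c \<in> e} \<subseteq> (\<lambda>u. {c, u}) ` (neighbours E c - {w})"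
  proof
    fix e assume e: "e \<in> {e\<in>M. c \<in> e}"
    with \<open>M \<subseteq> E\<close> have "e \<in> E" by auto
    with sg obtain a b where "e = {a, b}" by (auto simp: simple_graph_def)
    with e obtain u where u: "e = {c, u}" by (auto simp: insert_commute)
    with \<open>e \<in> E\<close> e \<open>{c, w} \<notin> M\<close> have "u \<in> neighbours E c - {w}"
      by (auto simp: neighbours_def adj_def)
    with u show "e \<in> (\<lambda>u. {c, u}) ` (neighbours E c - {w})" by blast
  qed
  then have "card {e\<in>M. c \<in> e} \<le> card (neighbours E c - {w})"
    using finite_neighbours[OF sg] by (meson card_image_le card_mono finite_Diff finite_imageI le_trans)
  also have "\<dots> < degree E c"
    using finite_neighbours[OF sg] \<open>adj E c w\<close> by (intro card_Diff1_less) (auto simp: neighbours_def)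
  finally show ?thesis .
qed

lemma card_incident_edges_insert_le:
  assumes "finite M"
  shows "card {e\<in>insert f M. v \<in> e} \<le> Suc (card {e\<in>M. v \<in> e})"
proof -
  have "card {e\<in>insert f M. v \<in> e} \<le> card (insert f {e\<in>M. v \<in> e})"
    using assms by (intro card_mono) auto
  also have "\<dots> \<le> Suc (card {e\<in>M. v \<in> e})"
    using assms by (simp add: card_insert_if)
  finally show ?thesis .
qed

lemma two_matching_insert_edge:
  assumes "two_matching E M" and "finite M" and "{w, c} \<in> E"
    and "card {e\<in>M. w \<in> e} \<le> 1" and "card {e\<in>M. c \<in> e} \<le> 1"
  shows "two_matching E (insert {w, c} M)"
  unfolding two_matching_def
proof (intro conjI allI)
  show "insert {w, c} M \<subseteq> E" using assms by (simp add: two_matching_def)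
  fix v
  show "card {e\<in>insert {w, c} M. v \<in> e} \<le> 2"
  proof (cases "v = w \<or> v = c")
    case True
    then show ?thesis
      using card_incident_edges_insert_le[OF \<open>finite M\<close>, of "{w, c}" v] assms(4,5) by auto
  next
    case False
    then have "{e\<in>insert {w, c} M. v \<in> e} = {e\<in>M. v \<in> e}" by auto
    with \<open>two_matching E M\<close> show ?thesis by (simp add: two_matching_def)
  qed
qed

lemma saturated_if_two_low_degree_neighbours:
  assumes sg: "simple_graph V E" and "w \<in> V" and "has_two_low_degree_neighbours E w"
  shows "saturated V E w"
  unfolding saturated_def
proof (intro conjI allI impI)
  show "w \<in> V" by fact
  obtain c1 c2 where c: "adj E w c1" "adj E w c2" "c1 \<noteq> c2" "degree E c1 \<le> 2" "degree E c2 \<le> 2"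
    using assms(3) by (auto simp: has_two_low_degree_neighbours_def)
  fix M assume max: "max_two_matching E M"
  then have M: "two_matching E M" "M \<subseteq> E" by (auto simp: max_two_matching_def two_matching_def)
  have "finite M" using simple_graph_finite_edges[OF sg] M(2) finite_subset by blast
  show "card {e\<in>M. w \<in> e} = 2"
  proof (rule ccontr)
    assume "card {e\<in>M. w \<in> e} \<noteq> 2"
    moreover have "card {e\<in>M. w \<in> e} \<le> 2" using M(1) by (simp add: two_matching_def)
    ultimately have at_w: "card {e\<in>M. w \<in> e} \<le> 1" by linarith
    obtain c where c_props: "adj E w c" "degree E c \<le> 2" "{w, c} \<notin> M"
    proof (cases "{w, c1} \<in> M \<and> {w, c2} \<in> M")
      case True
      then have "{{w, c1}, {w, c2}} \<subseteq> {e\<in>M. w \<in> e}" by auto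
      then have "card {{w, c1}, {w, c2}} \<le> card {e\<in>M. w \<in> e}"
        using \<open>finite M\<close> by (intro card_mono) auto
      moreover have "card {{w, c1}, {w, c2}} = 2" using \<open>c1 \<noteq> c2\<close> by (simp add: doubleton_eq_iff)
      ultimately show ?thesis using at_w by linarith
    next
      case False
      then show ?thesis using c that by blast
    qed
    have "adj E c w" "{c, w} \<notin> M" using c_props by (simp_all add: adj_def insert_commute)
    from card_incident_edges_less_degree[OF sg M(2) this] c_props(2)
    have "card {e\<in>M. c \<in> e} \<le> 1" by linarith
    then have "two_matching E (insert {w, c} M)"
      using two_matching_insert_edge[OF M(1) \<open>finite M\<close>] at_w \<open>adj E w c\<close> by (simp add: adj_def)
    with max have "card (insert {w, c} M) \<le> card M" by (simp add: max_two_matching_def)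
    with \<open>finite M\<close> \<open>{w, c} \<notin> M\<close> show False by simp
  qed
qed

lemma length_le_card_if_path_in:
  assumes "finite B" and "path_in E B xs"
  shows "length xs \<le> card B"
proof -
  have "length xs = card (set xs)" using assms(2) by (simp add: path_in_def distinct_card)
  also have "\<dots> \<le> card B" using assms by (simp add: path_in_def card_mono)
  finally show ?thesis .
qed

lemma path_in_Cons:
  assumes "path_in E B xs" and "xs \<noteq> []" and "y \<in> B" and "y \<notin> set xs" and "adj E y (hd xs)"
  shows "path_in E B (y # xs)"
  using assms unfolding path_in_def
  by (auto simp: hd_conv_nth nth_Cons split: nat.split)

lemma is_cycle_take_path:
  assumes "path_in E B xs" and "j < length xs" and "2 \<le> j" and "adj E (xs ! j) (xs ! 0)"
  shows "is_cycle E (take (Suc j) xs)"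
proof -
  have "take (Suc j) xs = take j xs @ [xs ! j]" using assms(2) by (simp add: take_Suc_conv_app_nth)
  then have "last (take (Suc j) xs) = xs ! j" by simp
  moreover have "hd (take (Suc j) xs) = xs ! 0" using assms(2) by (cases xs) auto
  ultimately show ?thesis using assms unfolding is_cycle_def path_in_def by auto
qed

text \<open>The first vertex of a longest path has a second neighbour in B; it must lie on the path,
  closing a cycle. (For a one-vertex path, xs ! 1 is an unspecified value, which is harmless.)\<close>

lemma exists_cycle_if_min_degree_two:
  assumes sg: "simple_graph V E" and "finite B" and "B \<noteq> {}"
    and deg: "\<And>b. b \<in> B \<Longrightarrow> 2 \<le> card (neighbours E b \<inter> B)"
  shows "\<exists>cs. is_cycle E cs"
proof -
  let ?P = "\<lambda>xs. path_in E B xs \<and> xs \<noteq> []"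
  obtain b where "b \<in> B" using \<open>B \<noteq> {}\<close> by blast
  then have "?P [b]" by (simp add: path_in_def)
  moreover have "\<forall>ys. ?P ys \<longrightarrow> length ys < Suc (card B)"
    using length_le_card_if_path_in[OF \<open>finite B\<close>] by (auto simp: less_Suc_eq_le)
  ultimately obtain xs where xs: "?P xs" and longest: "\<And>ys. ?P ys \<Longrightarrow> length ys \<le> length xs"
    using Lattices_Big.ex_has_greatest_nat[of ?P] by blast
  let ?x = "xs ! 0"
  have "?x \<in> B" using xs by (auto simp: path_in_def)
  have "\<not> neighbours E ?x \<inter> B \<subseteq> {xs ! 1}"
    using deg[OF \<open>?x \<in> B\<close>] card_mono[of "{xs ! 1}" "neighbours E ?x \<inter> B"] by auto
  then obtain y where y: "adj E ?x y" "y \<in> B" "y \<noteq> xs ! 1" by (auto simp: neighbours_def)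
  show ?thesis
  proof (cases "y \<in> set xs")
    case False
    then have "?P (y # xs)"
      using xs y path_in_Cons[of E B xs y] by (simp add: hd_conv_nth adj_commute)
    from longest[OF this] show ?thesis by simp
  next
    case True
    then obtain j where j: "j < length xs" "xs ! j = y" by (auto simp: in_set_conv_nth)
    have "j \<noteq> 0" using j y simple_graph_not_adj_self[OF sg, of ?x] by metis
    moreover have "j \<noteq> 1" using j y by auto
    ultimately have "2 \<le> j" by linarith
    with j y xs show ?thesis
      using is_cycle_take_path[of E B xs j] by (auto simp: adj_commute)
  qed
qed

lemma card_low_degree_neighbours_le_one:
  assumes "simple_graph V E" and "\<not> has_two_low_degree_neighbours E w"
  shows "card {c \<in> neighbours E w. degree E c \<le> 2} \<le> 1"
proof -
  have "finite {c \<in> neighbours E w. degree E c \<le> 2}"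
    using finite_neighbours[OF assms(1)] by simp
  moreover have "\<forall>c1\<in>{c \<in> neighbours E w. degree E c \<le> 2}. \<forall>c2\<in>{c \<in> neighbours E w. degree E c \<le> 2}. c1 = c2"
    using assms(2) by (auto simp: has_two_low_degree_neighbours_def neighbours_def)
  ultimately show ?thesis by (simp add: card_le_Suc0_iff_eq)
qed

lemma connected_card_le_two_if_degree_le_one:
  assumes sg: "simple_graph V E" and "connected_graph V E" and "u \<in> V"
    and deg: "\<And>v. v \<in> V \<Longrightarrow> degree E v \<le> 1"
  shows "card V \<le> 2"
proof -
  have unique: "x = y" if "v \<in> V" "adj E v x" "adj E v y" for v x y
    using deg[OF \<open>v \<in> V\<close>] finite_neighbours[OF sg, of v] that
    by (auto simp: neighbours_def card_le_Suc0_iff_eq)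
  have "z \<in> insert u (neighbours E u)" if "(adj E)\<^sup>*\<^sup>* u z" for z
    using that
  proof (induction rule: rtranclp_induct)
    case (step z z')
    show ?case
    proof (cases "z = u")
      case False
      with step have "adj E z u" by (simp add: neighbours_def adj_commute)
      with step unique[of z u z'] simple_graph_adj_in_vertices[OF sg] show ?thesis by blast
    qed (use step in \<open>simp add: neighbours_def\<close>)
  qed simp
  with assms(2,3) have "V \<subseteq> insert u (neighbours E u)" by (auto simp: connected_graph_def)
  then have "card V \<le> card (insert u (neighbours E u))"
    using finite_neighbours[OF sg] by (intro card_mono) auto
  also have "\<dots> \<le> Suc (degree E u)"
    using finite_neighbours[OF sg] by (simp add: card_insert_if)
  also have "\<dots> \<le> 2" using deg[OF \<open>u \<in> V\<close>] by simp
  finally show ?thesis .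
qed

lemma tree_has_vertex_with_two_low_degree_neighbours:
  assumes "tree V E" and "card V \<ge> 3"
  shows "\<exists>w\<in>V. has_two_low_degree_neighbours E w"
proof (rule ccontr)
  assume none: "\<not> ?thesis"
  from assms(1) have sg: "simple_graph V E" and "V \<noteq> {}" and "connected_graph V E"
    and "acyclic_graph E" by (auto simp: tree_def)
  have few: "card {c \<in> neighbours E w. degree E c \<le> 2} \<le> 1" if "w \<in> V" for w
    using none that card_low_degree_neighbours_le_one[OF sg] by blast
  show False
  proof (cases "\<exists>b\<in>V. 3 \<le> degree E b")
    case True
    define H where "H = {v\<in>V. 3 \<le> degree E v}"
    have "finite H" "H \<noteq> {}" using True sg by (auto simp: H_def simple_graph_def)
    moreover have "2 \<le> card (neighbours E b \<inter> H)" if "b \<in> H" for b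
    proof -
      let ?low = "{c \<in> neighbours E b. degree E c \<le> 2}"
      have "neighbours E b = (neighbours E b \<inter> H) \<union> ?low"
        using neighbours_subset_vertices[OF sg] by (auto simp: H_def)
      then have "degree E b = card ((neighbours E b \<inter> H) \<union> ?low)" by (rule arg_cong)
      also have "\<dots> \<le> card (neighbours E b \<inter> H) + card ?low" by (rule card_Un_le)
      also have "\<dots> \<le> card (neighbours E b \<inter> H) + 1" using few[of b] that by (simp add: H_def)
      finally have "degree E b \<le> card (neighbours E b \<inter> H) + 1" .
      with that show ?thesis by (simp add: H_def)
    qed
    ultimately have "\<exists>cs. is_cycle E cs" by (rule exists_cycle_if_min_degree_two[OF sg])
    with \<open>acyclic_graph E\<close> show False by (simp add: acyclic_graph_def)
  next
    case False
    have "degree E c \<le> 2" if "c \<in> V" for c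
    proof -
      have "\<not> 3 \<le> degree E c" using False that by blast
      then show ?thesis by linarith
    qed
    then have "{c \<in> neighbours E w. degree E c \<le> 2} = neighbours E w" for w
      using neighbours_subset_vertices[OF sg, of w] by blast
    then have "degree E v \<le> 1" if "v \<in> V" for v using few that by simp
    moreover obtain u where "u \<in> V" using \<open>V \<noteq> {}\<close> by blast
    ultimately have "card V \<le> 2"
      using connected_card_le_two_if_degree_le_one[OF sg \<open>connected_graph V E\<close>] by blast
    with assms(2) show False by simp
  qed
qed

theorem corollary2p7:
  fixes V :: "'a set" and E :: "'a set set"
  assumes "tree V E" and "card V \<ge> 3"
  shows "\<exists>w\<in>V. saturated V E w"
proof -
  have "simple_graph V E" using assms(1) by (simp add: tree_def)
  obtain w where "w \<in> V" and "has_two_low_degree_neighbours E w"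
    using tree_has_vertex_with_two_low_degree_neighbours[OF assms] ..
  with \<open>simple_graph V E\<close> have "saturated V E w" by (rule saturated_if_two_low_degree_neighbours)
  with \<open>w \<in> V\<close> show ?thesis ..
qed

end
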